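(* Let $n\ge3$ and let $f$ be a $\gamma_{tr3}(P_3\square P_n)$-function such that the number of vertices $v$ with $f(v)=\emptyset$ is minimum among all $\gamma_{tr3}(P_3\square P_n)$-functions. Then $|f((i,0))|=1$ for every $i\in\{0,1,2\}$ and $|f((0,j))|=1$ for every $j\in\{1,2,\dots,n-1\}$.
   Context: $P_m$ denotes the directed path with vertex set $\{0,1,\dots,m-1\}$ and arcs $(i,i+1)$ for $0\le i\le m-2$. The Cartesian product $D_1\square D_2$ has vertex set $V(D_1)\times V(D_2)$, with an arc from $(x_1,y_1)$ to $(x_2,y_2)$ iff either $(x_1,x_2)$ is an arc of $D_1$ and $y_1=y_2$, or $x_1=x_2$ and $(y_1,y_2)$ is an arc of $D_2$. For a digraph $D$ and positive integer $k$, a $k$-rainbow dominating function on $D$ is $f:V(D)\to\mathcal P(\{1,\dots,k\})$ such that every $v$ with $f(v)=\emptyset$ satisfies $\bigcup_{u\in N^-(v)}f(u)=\{1,\dots,k\}$, where $N^-(v)$ is the set of in-neighbors of $v$; its weight is $\sum_v|f(v)|$. It is total if additionally the subdigraph induced by $\{v:f(v)\ne\emptyset\}$ has no isolated vertex (a vertex with neither in- nor out-neighbors in it). $\gamma_{trk}(D)$ is the minimum weight of a total $k$-rainbow dominating function, and a $\gamma_{trk}(D)$-function is one attaining it. *)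

theory Defs
  imports Main
begin

type_synonym 'a digraph = "'a set \<times> ('a \<times> 'a) set"

definition verts :: "'a digraph \<Rightarrow> 'a set" where "verts D = fst D"
definition arcs :: "'a digraph \<Rightarrow> ('a \<times> 'a) set" where "arcs D = snd D"

definition dipath :: "nat \<Rightarrow> nat digraph" where
  "dipath m = ({0..<m}, {(i, Suc i) | i. Suc i < m})"

definition cart_prod :: "'a digraph \<Rightarrow> 'b digraph \<Rightarrow> ('a \<times> 'b) digraph" where
  "cart_prod D1 D2 = (verts D1 \<times> verts D2,
     {((x1, y1), (x2, y2)) | x1 y1 x2 y2.
        x1 \<in> verts D1 \<and> x2 \<in> verts D1 \<and> y1 \<in> verts D2 \<and> y2 \<in> verts D2 \<and>
        (((x1, x2) \<in> arcs D1 \<and> y1 = y2) \<or> (x1 = x2 \<and> (y1, y2) \<in> arcs D2))})"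

definition in_nbrs :: "'a digraph \<Rightarrow> 'a \<Rightarrow> 'a set" where
  "in_nbrs D v = {u \<in> verts D. (u, v) \<in> arcs D}"

definition rainbow_dom :: "'a digraph \<Rightarrow> nat \<Rightarrow> ('a \<Rightarrow> nat set) \<Rightarrow> bool" where
  "rainbow_dom D k f \<longleftrightarrow>
     (\<forall>v \<in> verts D. f v \<subseteq> {1..k}) \<and>
     (\<forall>v \<in> verts D. f v = {} \<longrightarrow> (\<Union>u \<in> in_nbrs D v. f u) = {1..k})"

text \<open>Total: the subdigraph induced by vertices with nonempty label has no isolated vertex.\<close>
definition total_rainbow_dom :: "'a digraph \<Rightarrow> nat \<Rightarrow> ('a \<Rightarrow> nat set) \<Rightarrow> bool" where
  "total_rainbow_dom D k f \<longleftrightarrow> rainbow_dom D k f \<and>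
     (\<forall>v \<in> verts D. f v \<noteq> {} \<longrightarrow>
        (\<exists>u \<in> verts D. u \<noteq> v \<and> f u \<noteq> {} \<and> ((u, v) \<in> arcs D \<or> (v, u) \<in> arcs D)))"

definition rd_weight :: "'a digraph \<Rightarrow> ('a \<Rightarrow> nat set) \<Rightarrow> nat" where
  "rd_weight D f = (\<Sum>v \<in> verts D. card (f v))"

definition gamma_tr :: "'a digraph \<Rightarrow> nat \<Rightarrow> nat" where
  "gamma_tr D k = (LEAST w. \<exists>f. total_rainbow_dom D k f \<and> rd_weight D f = w)"

definition gamma_tr_function :: "'a digraph \<Rightarrow> nat \<Rightarrow> ('a \<Rightarrow> nat set) \<Rightarrow> bool" where
  "gamma_tr_function D k f \<longleftrightarrow> total_rainbow_dom D k f \<and> rd_weight D f = gamma_tr D k"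

definition zero_verts :: "'a digraph \<Rightarrow> ('a \<Rightarrow> nat set) \<Rightarrow> 'a set" where
  "zero_verts D f = {v \<in> verts D. f v = {}}"

end

theory Submission
  imports Defs
begin

text \<open>
  If a vertex v carries at least two colours, keep just one of them at v and give colour 1 to
  every empty out-neighbour of v. The result is again a total rainbow dominating function with
  strictly fewer empty vertices, and its weight changes by 1 + (number of empty out-neighbours)
  - |f v|. So in an optimal function with the fewest empty vertices, a vertex with at least two
  colours has at least |f v| empty out-neighbours. A vertex on the first row or column of
  P_m \<box> P_n has at most two out-neighbours, one of which has it as sole in-neighbour; if that
  one is empty the vertex carries all k \<ge> 3 colours, so it carries at most one colour. It
  carries at least one, for otherwise its own sole in-neighbour, again on the first row or
  column, would carry all colours.
\<close>

definition out_nbrs :: "'a digraph \<Rightarrow> 'a \<Rightarrow> 'a set" where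
  "out_nbrs D v = {w \<in> verts D. (v, w) \<in> arcs D}"

definition spread :: "'a digraph \<Rightarrow> ('a \<Rightarrow> nat set) \<Rightarrow> 'a \<Rightarrow> nat \<Rightarrow> 'a \<Rightarrow> nat set" where
  "spread D f v a x =
     (if x = v then {a} else if x \<in> out_nbrs D v \<inter> zero_verts D f then {1} else f x)"

lemma gamma_tr_le_rd_weight:
  "total_rainbow_dom D k g \<Longrightarrow> gamma_tr D k \<le> rd_weight D g"
  unfolding gamma_tr_def by (rule Least_le) blast

lemma rainbow_dom_sole_in_nbr:
  assumes "rainbow_dom D k f" "1 \<le> k" "w \<in> verts D" "f w = {}" "in_nbrs D w \<subseteq> {u}"
  shows "f u = {1..k}"
proof -
  have cover: "(\<Union>x \<in> in_nbrs D w. f x) = {1..k}"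
    using assms(1,3,4) unfolding rainbow_dom_def by blast
  with \<open>1 \<le> k\<close> have "in_nbrs D w \<noteq> {}" by auto
  with assms(5) have "in_nbrs D w = {u}" by blast
  with cover show ?thesis by simp
qed

lemma total_rainbow_dom_spread:
  assumes tr: "total_rainbow_dom D k f" and "1 \<le> k" and v: "v \<in> verts D" and a: "a \<in> f v"
  shows "total_rainbow_dom D k (spread D f v a)"
proof -
  let ?g = "spread D f v a"
  have sub: "\<forall>x\<in>verts D. f x \<subseteq> {1..k}"
    and dom: "\<forall>x\<in>verts D. f x = {} \<longrightarrow> (\<Union>u \<in> in_nbrs D x. f u) = {1..k}"
    and tot: "\<forall>x\<in>verts D. f x \<noteq> {} \<longrightarrow>
        (\<exists>u \<in> verts D. u \<noteq> x \<and> f u \<noteq> {} \<and> ((u, x) \<in> arcs D \<or> (x, u) \<in> arcs D))"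
    using tr unfolding total_rainbow_dom_def rainbow_dom_def by auto
  have "a \<in> {1..k}" using sub v a by blast
  then have g_sub: "?g x \<subseteq> {1..k}" if "x \<in> verts D" for x
    using sub that \<open>1 \<le> k\<close> by (auto simp: spread_def)
  have f_le_g: "f x \<subseteq> ?g x" if "x \<noteq> v" for x
    using that by (auto simp: spread_def zero_verts_def)
  have g_ne: "?g x \<noteq> {}" if "f x \<noteq> {}" for x
    using that by (simp add: spread_def)
  show ?thesis
    unfolding total_rainbow_dom_def rainbow_dom_def
  proof (intro conjI ballI impI)
    fix x assume "x \<in> verts D"
    then show "?g x \<subseteq> {1..k}" by (rule g_sub)
  next
    fix x assume x: "x \<in> verts D" and gx: "?g x = {}"
    then have "x \<noteq> v" and "x \<notin> out_nbrs D v \<inter> zero_verts D f"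
      by (auto simp: spread_def split: if_splits)
    with gx have fx: "f x = {}" by (auto simp: spread_def split: if_splits)
    with \<open>x \<notin> out_nbrs D v \<inter> zero_verts D f\<close> x have "x \<notin> out_nbrs D v"
      by (simp add: zero_verts_def)
    then have "v \<notin> in_nbrs D x" by (auto simp: in_nbrs_def out_nbrs_def x)
    then have "(\<Union>u \<in> in_nbrs D x. f u) \<subseteq> (\<Union>u \<in> in_nbrs D x. ?g u)"
      by (intro UN_mono subset_refl f_le_g) auto
    moreover have "(\<Union>u \<in> in_nbrs D x. ?g u) \<subseteq> {1..k}"
      using g_sub by (auto simp: in_nbrs_def)
    ultimately show "(\<Union>u \<in> in_nbrs D x. ?g u) = {1..k}" using dom x fx by auto
  next
    fix x assume x: "x \<in> verts D" and gx: "?g x \<noteq> {}"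
    show "\<exists>u \<in> verts D. u \<noteq> x \<and> ?g u \<noteq> {} \<and> ((u, x) \<in> arcs D \<or> (x, u) \<in> arcs D)"
    proof (cases "x \<in> out_nbrs D v \<inter> zero_verts D f")
      case True
      then have "(v, x) \<in> arcs D" "v \<noteq> x"
        using a by (auto simp: out_nbrs_def zero_verts_def)
      then show ?thesis using v by (auto simp: spread_def)
    next
      case False
      then have "f x \<noteq> {}" using gx a by (auto simp: spread_def split: if_splits)
      then obtain u where "u \<in> verts D" "u \<noteq> x" "f u \<noteq> {}" "(u, x) \<in> arcs D \<or> (x, u) \<in> arcs D"
        using tot x by blast
      then show ?thesis using g_ne by blast
    qed
  qed
qed

lemma rd_weight_spread:
  assumes fin: "finite (verts D)" and v: "v \<in> verts D" and a: "a \<in> f v"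
  shows "rd_weight D (spread D f v a) + card (f v)
           = rd_weight D f + 1 + card (out_nbrs D v \<inter> zero_verts D f)"
proof -
  define Z where "Z = out_nbrs D v \<inter> zero_verts D f"
  have Z_inside: "(verts D - {v}) \<inter> Z = Z"
    using a by (auto simp: Z_def out_nbrs_def zero_verts_def)
  have "(\<Sum>x\<in>verts D - {v}. card (spread D f v a x))
          = (\<Sum>x\<in>verts D - {v}. card (f x) + (if x \<in> Z then 1 else 0))"
    by (rule sum.cong) (auto simp: Z_def spread_def zero_verts_def)
  also have "\<dots> = (\<Sum>x\<in>verts D - {v}. card (f x)) + card Z"
    using fin Z_inside by (simp add: sum.distrib sum.If_cases)
  finally have rest: "(\<Sum>x\<in>verts D - {v}. card (spread D f v a x))
      = (\<Sum>x\<in>verts D - {v}. card (f x)) + card Z" .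
  have "spread D f v a v = {a}" by (simp add: spread_def)
  with rest show ?thesis
    unfolding Z_def rd_weight_def sum.remove[OF fin v] by simp
qed

lemma zero_verts_spread:
  "a \<in> f v \<Longrightarrow> zero_verts D (spread D f v a) = zero_verts D f - out_nbrs D v"
  by (auto simp: zero_verts_def spread_def)

lemma card_le_card_empty_out_nbrs:
  assumes fin: "finite (verts D)" and "1 \<le> k"
    and opt: "gamma_tr_function D k f"
    and fewest_zeros: "\<forall>g. gamma_tr_function D k g \<longrightarrow> card (zero_verts D f) \<le> card (zero_verts D g)"
    and v: "v \<in> verts D" and two: "2 \<le> card (f v)"
  shows "card (f v) \<le> card (out_nbrs D v \<inter> zero_verts D f)"
proof (rule ccontr)
  let ?Z = "out_nbrs D v \<inter> zero_verts D f"
  assume "\<not> ?thesis"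
  then have few: "card ?Z + 1 \<le> card (f v)" by simp
  obtain a where a: "a \<in> f v" using two by fastforce
  let ?g = "spread D f v a"
  have f_tr: "total_rainbow_dom D k f" and f_weight: "rd_weight D f = gamma_tr D k"
    using opt by (auto simp: gamma_tr_function_def)
  have g_tr: "total_rainbow_dom D k ?g"
    using total_rainbow_dom_spread[OF f_tr \<open>1 \<le> k\<close> v a] .
  have "gamma_tr D k \<le> rd_weight D ?g" using g_tr by (rule gamma_tr_le_rd_weight)
  with rd_weight_spread[of D v a f, OF fin v a] f_weight few
  have "card (f v) = card ?Z + 1" and "rd_weight D ?g = gamma_tr D k" by auto
  then have "card ?Z \<noteq> 0" and "gamma_tr_function D k ?g"
    using two g_tr by (auto simp: gamma_tr_function_def)
  moreover have "finite ?Z" using fin by (auto simp: out_nbrs_def)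
  moreover have "finite (zero_verts D f)" using fin by (simp add: zero_verts_def)
  ultimately have "card (zero_verts D ?g) < card (zero_verts D f)"
    unfolding zero_verts_spread[of a f v D, OF a] Diff_Int2[symmetric, of "zero_verts D f"]
    by (intro psubset_card_mono) auto
  with fewest_zeros \<open>gamma_tr_function D k ?g\<close> show False by (simp add: not_le[symmetric])
qed

lemma card_le_1_if_out_nbr_has_sole_in_nbr:
  assumes fin: "finite (verts D)" and "3 \<le> k"
    and opt: "gamma_tr_function D k f"
    and fewest_zeros: "\<forall>g. gamma_tr_function D k g \<longrightarrow> card (zero_verts D f) \<le> card (zero_verts D g)"
    and v: "v \<in> verts D" and out: "out_nbrs D v \<subseteq> {s, t}" and sole: "in_nbrs D s \<subseteq> {v}"
  shows "card (f v) \<le> 1"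
proof (rule ccontr)
  let ?Z = "out_nbrs D v \<inter> zero_verts D f"
  assume "\<not> ?thesis"
  then have many_empty: "card (f v) \<le> card ?Z"
    using card_le_card_empty_out_nbrs[OF fin _ opt fewest_zeros v] \<open>3 \<le> k\<close> by simp
  have "card ?Z \<le> card {s, t}" using out by (intro card_mono) auto
  also have "\<dots> \<le> 2" by (simp add: card_insert_if)
  finally have Z_le_2: "card ?Z \<le> 2" .
  show False
  proof (cases "s \<in> ?Z")
    case True
    then have "s \<in> verts D" "f s = {}" by (simp_all add: out_nbrs_def zero_verts_def)
    moreover have "rainbow_dom D k f"
      using opt by (simp add: gamma_tr_function_def total_rainbow_dom_def)
    ultimately have "f v = {1..k}"
      using sole \<open>3 \<le> k\<close> by (intro rainbow_dom_sole_in_nbr) simp_all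
    with many_empty Z_le_2 \<open>3 \<le> k\<close> show False by simp
  next
    case False
    then have "?Z \<subseteq> {t}" using out by blast
    then have "card ?Z \<le> 1" using card_mono[of "{t}" ?Z] by simp
    with many_empty \<open>\<not> card (f v) \<le> 1\<close> show False by simp
  qed
qed

lemma verts_grid: "verts (cart_prod (dipath m) (dipath n)) = {0..<m} \<times> {0..<n}"
  by (simp add: cart_prod_def verts_def dipath_def)

lemma arcs_grid:
  "((x1, y1), (x2, y2)) \<in> arcs (cart_prod (dipath m) (dipath n)) \<longleftrightarrow>
     x1 < m \<and> y1 < n \<and>
     (x2 = Suc x1 \<and> y2 = y1 \<and> Suc x1 < m \<or> x2 = x1 \<and> y2 = Suc y1 \<and> Suc y1 < n)"
  by (auto simp: cart_prod_def verts_def arcs_def dipath_def)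

lemma out_nbrs_grid: "out_nbrs (cart_prod (dipath m) (dipath n)) (i, j) \<subseteq> {(Suc i, j), (i, Suc j)}"
  by (auto simp: out_nbrs_def arcs_grid)

lemma in_nbrs_grid_first_row: "in_nbrs (cart_prod (dipath m) (dipath n)) (0, j) \<subseteq> {(0, j - 1)}"
  by (auto simp: in_nbrs_def arcs_grid)

lemma in_nbrs_grid_first_col: "in_nbrs (cart_prod (dipath m) (dipath n)) (i, 0) \<subseteq> {(i - 1, 0)}"
  by (auto simp: in_nbrs_def arcs_grid)

lemma card_first_row_col_label_le_1:
  fixes m n :: nat and f :: "nat \<times> nat \<Rightarrow> nat set"
  defines "D \<equiv> cart_prod (dipath m) (dipath n)"
  assumes "3 \<le> k"
    and opt: "gamma_tr_function D k f"
    and fewest_zeros: "\<forall>g. gamma_tr_function D k g \<longrightarrow> card (zero_verts D f) \<le> card (zero_verts D g)"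
    and ij: "i < m" "j < n" "i = 0 \<or> j = 0"
  shows "card (f (i, j)) \<le> 1"
proof -
  have fin: "finite (verts D)" by (simp add: D_def verts_grid)
  show ?thesis
  proof (cases "i = 0")
    case True
    have "in_nbrs D (0, Suc j) \<subseteq> {(0, j)}"
      using in_nbrs_grid_first_row[of m n "Suc j"] by (simp add: D_def)
    with True ij show ?thesis
      by (intro card_le_1_if_out_nbr_has_sole_in_nbr[OF fin \<open>3 \<le> k\<close> opt fewest_zeros,
            of _ "(0, Suc j)" "(Suc 0, j)"])
         (auto simp: D_def verts_grid dest: subsetD[OF out_nbrs_grid])
  next
    case False
    have "in_nbrs D (Suc i, 0) \<subseteq> {(i, 0)}"
      using in_nbrs_grid_first_col[of m n "Suc i"] by (simp add: D_def)
    with False ij show ?thesis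
      by (intro card_le_1_if_out_nbr_has_sole_in_nbr[OF fin \<open>3 \<le> k\<close> opt fewest_zeros,
            of _ "(Suc i, 0)" "(i, Suc 0)"])
         (auto simp: D_def verts_grid dest: subsetD[OF out_nbrs_grid])
  qed
qed

lemma card_first_row_col_label_eq_1:
  fixes m n :: nat and f :: "nat \<times> nat \<Rightarrow> nat set"
  defines "D \<equiv> cart_prod (dipath m) (dipath n)"
  assumes "3 \<le> k"
    and opt: "gamma_tr_function D k f"
    and fewest_zeros: "\<forall>g. gamma_tr_function D k g \<longrightarrow> card (zero_verts D f) \<le> card (zero_verts D g)"
    and "i < m" "j < n" "i = 0 \<or> j = 0"
  shows "card (f (i, j)) = 1"
proof -
  note le_1 = card_first_row_col_label_le_1[OF \<open>3 \<le> k\<close> opt[unfolded D_def]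
      fewest_zeros[unfolded D_def], folded D_def]
  have rd: "rainbow_dom D k f"
    using opt by (simp add: gamma_tr_function_def total_rainbow_dom_def)
  have ij: "(i, j) \<in> verts D" using \<open>i < m\<close> \<open>j < n\<close> by (simp add: D_def verts_grid)
  \<comment> \<open>With truncated subtraction, (0, 0) is its own candidate sole in-neighbour.\<close>
  obtain u where u: "in_nbrs D (i, j) \<subseteq> {u}" "card (f u) \<le> 1"
  proof (cases "i = 0")
    case True
    then show ?thesis
      using that in_nbrs_grid_first_row[of m n j] le_1[of 0 "j - 1"] \<open>j < n\<close> \<open>i < m\<close>
      by (simp add: D_def)
  next
    case False
    then show ?thesis
      using that in_nbrs_grid_first_col[of m n i] le_1[of "i - 1" 0] \<open>j < n\<close> \<open>i < m\<close> \<open>i = 0 \<or> j = 0\<close>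
      by (simp add: D_def)
  qed
  have "f (i, j) \<noteq> {}"
  proof
    assume "f (i, j) = {}"
    with rd \<open>3 \<le> k\<close> ij u(1) have "f u = {1..k}" by (intro rainbow_dom_sole_in_nbr) auto
    with u(2) \<open>3 \<le> k\<close> show False by simp
  qed
  moreover have "finite (f (i, j))"
    using rd ij unfolding rainbow_dom_def by (meson finite_atLeastAtMost finite_subset)
  ultimately show ?thesis using le_1[OF \<open>i < m\<close> \<open>j < n\<close> \<open>i = 0 \<or> j = 0\<close>]
    by (simp add: card_gt_0_iff le_antisym Suc_leI)
qed

theorem lemma4p10:
  fixes n :: nat and f :: "nat \<times> nat \<Rightarrow> nat set"
  assumes "n \<ge> 3"
    and "gamma_tr_function (cart_prod (dipath 3) (dipath n)) 3 f"
    and "\<forall>g. gamma_tr_function (cart_prod (dipath 3) (dipath n)) 3 g \<longrightarrow>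
           card (zero_verts (cart_prod (dipath 3) (dipath n)) f)
             \<le> card (zero_verts (cart_prod (dipath 3) (dipath n)) g)"
  shows "(\<forall>i \<in> {0,1,2}. card (f (i, 0)) = 1) \<and> (\<forall>j \<in> {1..n-1}. card (f (0, j)) = 1)"
proof -
  have "card (f (i, j)) = 1" if "i < 3" "j < n" "i = 0 \<or> j = 0" for i j
    using card_first_row_col_label_eq_1[OF _ assms(2,3) that] by simp
  then show ?thesis using assms(1) by auto
qed

end
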